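(* Every monotonically normal, $nwd$-separable space is $D$-separable.
   Context: A space is $nwd$-separable if it has a dense subset which is a countable union of nowhere dense sets. A space $X$ is $D$-separable if for every sequence $\{D_n:n<\omega\}$ of dense subsets of $X$ there are discrete sets $E_n\subseteq D_n$ with $\bigcup_{n<\omega}E_n$ dense in $X$. *)

theory Defs
  imports "HOL-Analysis.Analysis"
begin

definition dense_in_top :: "'a topology \<Rightarrow> 'a set \<Rightarrow> bool" where
  "dense_in_top X D \<longleftrightarrow> D \<subseteq> topspace X \<and> X closure_of D = topspace X"

definition nowhere_dense_in :: "'a topology \<Rightarrow> 'a set \<Rightarrow> bool" where
  "nowhere_dense_in X N \<longleftrightarrow> N \<subseteq> topspace X \<and> X interior_of (X closure_of N) = {}"

definition discrete_in :: "'a topology \<Rightarrow> 'a set \<Rightarrow> bool" where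
  "discrete_in X E \<longleftrightarrow> E \<subseteq> topspace X \<and> (\<forall>x\<in>E. \<exists>U. openin X U \<and> U \<inter> E = {x})"

definition monotonically_normal :: "'a topology \<Rightarrow> bool" where
  "monotonically_normal X \<longleftrightarrow> t1_space X \<and>
     (\<exists>H :: 'a \<Rightarrow> 'a set \<Rightarrow> 'a set.
        (\<forall>x U. openin X U \<and> x \<in> U \<longrightarrow> openin X (H x U) \<and> x \<in> H x U \<and> H x U \<subseteq> U) \<and>
        (\<forall>x U y V. openin X U \<and> x \<in> U \<and> openin X V \<and> y \<in> V \<and> H x U \<inter> H y V \<noteq> {}
                    \<longrightarrow> x \<in> V \<or> y \<in> U))"

definition nwd_separable :: "'a topology \<Rightarrow> bool" where
  "nwd_separable X \<longleftrightarrow> (\<exists>F. countable F \<and> (\<forall>N\<in>F. nowhere_dense_in X N) \<and> dense_in_top X (\<Union>F))"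

definition D_separable :: "'a topology \<Rightarrow> bool" where
  "D_separable X \<longleftrightarrow> (\<forall>D :: nat \<Rightarrow> 'a set. (\<forall>n. dense_in_top X (D n)) \<longrightarrow>
     (\<exists>E :: nat \<Rightarrow> 'a set. (\<forall>n. E n \<subseteq> D n \<and> discrete_in X (E n)) \<and> dense_in_top X (\<Union>n. E n)))"

end

theory Submission
  imports Defs
begin

text \<open>Given a dense set \<open>D\<close> and a nowhere dense set \<open>N\<close>,
  take a maximal family of pairs \<open>(e, U)\<close> with \<open>e \<in> D \<inter> U\<close>, \<open>U\<close> open and disjoint from the
  closure of \<open>N\<close>, whose sets \<open>H e U\<close> are pairwise disjoint. The points \<open>e\<close> form a discrete
  subset of \<open>D\<close>, and maximality together with the monotone normality condition forces every
  point of \<open>N\<close> into its closure. Enumerating the countably many nowhere dense sets of an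
  \<open>nwd\<close>-separable space and doing this for the \<open>n\<close>-th of them inside \<open>D n\<close> gives \<open>D\<close>-separability.\<close>

definition monotone_normality_operator :: "'a topology \<Rightarrow> ('a \<Rightarrow> 'a set \<Rightarrow> 'a set) \<Rightarrow> bool" where
  "monotone_normality_operator X H \<longleftrightarrow>
     (\<forall>x U. openin X U \<and> x \<in> U \<longrightarrow> openin X (H x U) \<and> x \<in> H x U \<and> H x U \<subseteq> U) \<and>
     (\<forall>x U y V. openin X U \<and> x \<in> U \<and> openin X V \<and> y \<in> V \<and> H x U \<inter> H y V \<noteq> {}
                 \<longrightarrow> x \<in> V \<or> y \<in> U)"

lemma monotonically_normalE:
  assumes "monotonically_normal X"
  obtains H where "monotone_normality_operator X H"
proof -
  have "\<exists>H. monotone_normality_operator X H"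
    using assms unfolding monotonically_normal_def monotone_normality_operator_def by (rule conjunct2)
  then show ?thesis using that by blast
qed

lemma maximal_pairwise_disjnt_subfamily:
  obtains M where "M \<subseteq> S" "pairwise (\<lambda>p q. disjnt (g p) (g q)) M"
    "\<And>p. \<lbrakk>p \<in> S; g p \<noteq> {}\<rbrakk> \<Longrightarrow> \<exists>q\<in>M. \<not> disjnt (g p) (g q)"
proof -
  define A where "A = {P. P \<subseteq> S \<and> pairwise (\<lambda>p q. disjnt (g p) (g q)) P}"
  have "\<Union>C \<in> A" if "C \<in> chains A" for C
  proof -
    have "C \<subseteq> A" and ch: "chain\<^sub>\<subseteq> C" using that by (auto simp: chains_def)
    have "disjnt (g p) (g q)" if "p \<in> \<Union>C" "q \<in> \<Union>C" "p \<noteq> q" for p q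
    proof -
      from that obtain P Q where "P \<in> C" "Q \<in> C" "p \<in> P" "q \<in> Q" by blast
      with ch obtain R where "R \<in> C" "p \<in> R" "q \<in> R" unfolding chain_subset_def by blast
      then show ?thesis using \<open>C \<subseteq> A\<close> \<open>p \<noteq> q\<close> unfolding A_def pairwise_def by blast
    qed
    then show ?thesis using \<open>C \<subseteq> A\<close> unfolding A_def pairwise_def by blast
  qed
  then obtain M where "M \<in> A" and max: "\<And>P. \<lbrakk>P \<in> A; M \<subseteq> P\<rbrakk> \<Longrightarrow> P = M"
    using Zorn_Lemma[of A] by blast
  moreover have "\<exists>q\<in>M. \<not> disjnt (g p) (g q)" if "p \<in> S" "g p \<noteq> {}" for p
  proof (rule ccontr)
    assume "\<not> ?thesis"
    then have "insert p M \<in> A"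
      using \<open>M \<in> A\<close> \<open>p \<in> S\<close> unfolding A_def by (auto simp: pairwise_insert disjnt_sym)
    then have "p \<in> M" using max by blast
    with \<open>\<not> ?thesis\<close> \<open>g p \<noteq> {}\<close> show False by (auto simp: disjnt_def)
  qed
  ultimately show ?thesis using that unfolding A_def by blast
qed

lemma discrete_in_image_if_disjoint_open_neighbourhoods:
  assumes "f ` M \<subseteq> topspace X" and "\<And>p. p \<in> M \<Longrightarrow> openin X (G p) \<and> f p \<in> G p"
    and "pairwise (\<lambda>p q. disjnt (G p) (G q)) M"
  shows "discrete_in X (f ` M)"
  unfolding discrete_in_def
proof (intro conjI ballI)
  fix e assume "e \<in> f ` M"
  then obtain p where "p \<in> M" "e = f p" by blast
  have "q = p" if "q \<in> M" "f q \<in> G p" for q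
    using assms(2,3) that \<open>p \<in> M\<close> unfolding pairwise_def disjnt_def by blast
  then have "G p \<inter> f ` M = {e}"
    using assms(2) \<open>p \<in> M\<close> \<open>e = f p\<close> by blast
  then show "\<exists>U. openin X U \<and> U \<inter> f ` M = {e}" using assms(2) \<open>p \<in> M\<close> by blast
qed (fact assms(1))

lemma nowhere_dense_in_open_not_subset_closure:
  assumes "nowhere_dense_in X N" and "openin X G" and "G \<noteq> {}"
  shows "\<not> G \<subseteq> X closure_of N"
  using assms interior_of_maximal unfolding nowhere_dense_in_def by blast

lemma dense_in_top_meets_open:
  assumes "dense_in_top X D" and "openin X G" and "G \<noteq> {}"
  obtains d where "d \<in> D" "d \<in> G"
  using assms unfolding dense_in_top_def dense_intersects_open by blast

lemma nowhere_dense_in_subset_closure_of_discrete: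
  assumes H: "monotone_normality_operator X H"
    and D: "dense_in_top X D" and N: "nowhere_dense_in X N"
  obtains E where "E \<subseteq> D" "discrete_in X E" "N \<subseteq> X closure_of E"
proof -
  have H_nbhd: "openin X (H x U)" "x \<in> H x U" "H x U \<subseteq> U" if "openin X U" "x \<in> U" for x U
    using H that unfolding monotone_normality_operator_def by blast+
  have H_meet: "x \<in> V \<or> y \<in> U"
    if "openin X U" "x \<in> U" "openin X V" "y \<in> V" "H x U \<inter> H y V \<noteq> {}" for x U y V
    using H that unfolding monotone_normality_operator_def by blast
  define W where "W = topspace X - X closure_of N"
  define S where "S = {(e, U). e \<in> D \<and> openin X U \<and> e \<in> U \<and> U \<subseteq> W}"
  obtain M where "M \<subseteq> S" and disj: "pairwise (\<lambda>p q. disjnt (case_prod H p) (case_prod H q)) M"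
    and max: "\<And>p. \<lbrakk>p \<in> S; case_prod H p \<noteq> {}\<rbrakk> \<Longrightarrow> \<exists>q\<in>M. \<not> disjnt (case_prod H p) (case_prod H q)"
    by (rule maximal_pairwise_disjnt_subfamily[of S "case_prod H"]) blast
  have M: "e \<in> D" "openin X U" "e \<in> U" "U \<subseteq> W" if "(e, U) \<in> M" for e U
    using \<open>M \<subseteq> S\<close> that unfolding S_def by blast+
  have "discrete_in X (fst ` M)"
  proof (rule discrete_in_image_if_disjoint_open_neighbourhoods[where G = "case_prod H"])
    show "fst ` M \<subseteq> topspace X"
      using M D unfolding dense_in_top_def by force
    show "openin X (case_prod H p) \<and> fst p \<in> case_prod H p" if "p \<in> M" for p
      using that M H_nbhd by (cases p) simp
  qed (fact disj)
  moreover have "N \<subseteq> X closure_of (fst ` M)"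
  proof
    fix x assume "x \<in> N"
    then have x: "x \<in> topspace X" "x \<notin> W"
      using N closure_of_subset unfolding nowhere_dense_in_def W_def by blast+
    have "\<exists>e\<in>fst ` M. e \<in> V" if V: "openin X V" "x \<in> V" for V
    proof -
      have HxV: "openin X (H x V)" "x \<in> H x V" "H x V \<subseteq> V" using H_nbhd[OF V] by blast+
      define G where "G = H x V \<inter> W"
      have "openin X G" unfolding G_def W_def using HxV(1) by (intro openin_Int openin_diff) auto
      moreover have "G \<noteq> {}"
        using nowhere_dense_in_open_not_subset_closure[OF N HxV(1)] HxV(2) openin_subset[OF HxV(1)]
        unfolding G_def W_def by blast
      ultimately obtain d where "d \<in> D" "d \<in> G" by (rule dense_in_top_meets_open[OF D])
      have HdG: "openin X (H d G)" "d \<in> H d G" "H d G \<subseteq> G"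
        using H_nbhd[OF \<open>openin X G\<close> \<open>d \<in> G\<close>] by blast+
      have "(d, G) \<in> S" unfolding S_def G_def using \<open>d \<in> D\<close> \<open>openin X G\<close> \<open>d \<in> G\<close> G_def by auto
      then obtain e U where eU: "(e, U) \<in> M" and "\<not> disjnt (H d G) (H e U)"
        using max[of "(d, G)"] HdG(2) by fastforce
      text \<open>\<open>H d G \<subseteq> G \<subseteq> H x V\<close>, and \<open>x \<in> U\<close> is impossible because \<open>U \<subseteq> W\<close>.\<close>
      then have "H x V \<inter> H e U \<noteq> {}"
        using HdG(3) unfolding G_def disjnt_def by blast
      then have "e \<in> V" using H_meet[OF V(1,2) M(2,3)[OF eU]] M(4)[OF eU] x(2) by blast
      then show ?thesis using eU by force
    qed
    then show "x \<in> X closure_of (fst ` M)"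
      using x(1) unfolding in_closure_of by blast
  qed
  moreover have "fst ` M \<subseteq> D" using M by force
  ultimately show ?thesis using that by blast
qed

lemma dense_in_top_if_closure_covers_dense:
  assumes "dense_in_top X A" and "A \<subseteq> X closure_of B" and "B \<subseteq> topspace X"
  shows "dense_in_top X B"
proof -
  have "X closure_of A \<subseteq> X closure_of B"
    using assms(2) closedin_closure_of by (rule closure_of_minimal)
  then have "X closure_of B = topspace X"
    using assms(1) closure_of_subset_topspace[of X B] unfolding dense_in_top_def by simp
  then show ?thesis using assms(3) unfolding dense_in_top_def by simp
qed

lemma D_separable_if_countable_family_in_closures_of_discrete:
  assumes "countable F" and "dense_in_top X (\<Union>F)"
    and closure_discrete: "\<And>N D. \<lbrakk>N \<in> F; dense_in_top X D\<rbrakk>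
      \<Longrightarrow> \<exists>E. E \<subseteq> D \<and> discrete_in X E \<and> N \<subseteq> X closure_of E"
  shows "D_separable X"
  unfolding D_separable_def
proof (intro allI impI)
  fix D :: "nat \<Rightarrow> 'a set" assume D: "\<forall>n. dense_in_top X (D n)"
  text \<open>Adding \<open>{}\<close> makes the family nonempty, so that it can be enumerated by \<open>nat\<close>.\<close>
  define Nf where "Nf = from_nat_into (insert {} F)"
  have range_Nf: "range Nf = insert {} F"
    unfolding Nf_def using \<open>countable F\<close> by (simp add: range_from_nat_into)
  have "\<exists>E. E \<subseteq> D n \<and> discrete_in X E \<and> N \<subseteq> X closure_of E" if "N \<in> insert {} F" for N n
    using that closure_discrete D unfolding discrete_in_def by blast
  then have "\<forall>n. \<exists>E. E \<subseteq> D n \<and> discrete_in X E \<and> Nf n \<subseteq> X closure_of E"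
    by (simp flip: range_Nf)
  from choice[OF this] obtain E
    where E: "\<forall>n. E n \<subseteq> D n \<and> discrete_in X (E n) \<and> Nf n \<subseteq> X closure_of E n"
    by (rule exE)
  have closure_E: "Nf n \<subseteq> X closure_of (\<Union>n. E n)" for n
  proof -
    have "Nf n \<subseteq> X closure_of E n" using E by blast
    also have "\<dots> \<subseteq> X closure_of (\<Union>n. E n)" by (rule closure_of_mono) blast
    finally show ?thesis .
  qed
  have "\<Union>F = (\<Union>n. Nf n)" using range_Nf by simp
  also have "\<dots> \<subseteq> X closure_of (\<Union>n. E n)" using closure_E by blast
  finally have "\<Union>F \<subseteq> X closure_of (\<Union>n. E n)" .
  moreover have "(\<Union>n. E n) \<subseteq> topspace X"
    using E unfolding discrete_in_def by (simp add: UN_least)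
  ultimately have "dense_in_top X (\<Union>n. E n)"
    by (rule dense_in_top_if_closure_covers_dense[OF \<open>dense_in_top X (\<Union>F)\<close>])
  then show "\<exists>E. (\<forall>n. E n \<subseteq> D n \<and> discrete_in X (E n)) \<and> dense_in_top X (\<Union>n. E n)"
    using E by blast
qed

theorem theorem6p7:
  fixes X :: "'a topology"
  assumes "monotonically_normal X" and "nwd_separable X"
  shows "D_separable X"
proof -
  obtain H where H: "monotone_normality_operator X H"
    using assms(1) by (rule monotonically_normalE)
  obtain F where "countable F" and F: "\<forall>N\<in>F. nowhere_dense_in X N" and "dense_in_top X (\<Union>F)"
    using assms(2) unfolding nwd_separable_def by blast
  show ?thesis
  proof (rule D_separable_if_countable_family_in_closures_of_discrete[OF \<open>countable F\<close> \<open>dense_in_top X (\<Union>F)\<close>])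
    fix N D assume "N \<in> F" and "dense_in_top X D"
    then show "\<exists>E. E \<subseteq> D \<and> discrete_in X E \<and> N \<subseteq> X closure_of E"
      using F by (metis nowhere_dense_in_subset_closure_of_discrete[OF H])
  qed
qed

end
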